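(* Let $m=rn$. There is a bijection between ordered pairs $(P,Q)$ of standard Young tableaux of the same shape, both in $T([m];d)$ and both satisfying Condition (T), and walks in $\widetilde W(d,2m;\vec 0)$ staying in the region $\{x_1\ge x_2\ge\cdots\ge x_d\}$. (Explicitly: if $c_1\cdots c_m$ and $c'_1\cdots c'_m$ are the column-index sequences of $P$ and $Q$, where $c_i$ is the column of $P$ containing $i$, the pair corresponds to the walk $c_1\cdots c_m\,|\,c'_m\cdots c'_1$.)
   Context: $n,r,d\ge1$, $m=rn$. $T([m];d)$ is the set of standard Young tableaux with entries exactly $1,\dots,m$ and at most $d$ columns; row $i$ is above row $i+1$. Condition (T): for each $i\in[n]$ and $1\le s<r$, the row containing $r(i-1)+s$ is strictly above the row containing $r(i-1)+s+1$. A walk $a_1\cdots a_m|b_1\cdots b_m$ ($a_i,b_i\in[d]$) denotes the walk in $\mathbb Z^d$ from the origin with steps $e_{a_1},\dots,e_{a_m},-e_{b_1},\dots,-e_{b_m}$. $W'(d,2m;\vec 0)$ is the set of such walks ending at the origin with $a_{r(i-1)+s}\ge a_{r(i-1)+s+1}$ and $b_{r(i-1)+s}\ge b_{r(i-1)+s+1}$ for all $i\in[n]$, $1\le s<r$. For $w=a_1\cdots a_m|b_1\cdots b_m$, $\tilde w=a_1\cdots a_m|b_m\cdots b_1$, and $\widetilde W(d,2m;\vec0)=\{\tilde w:w\in W'(d,2m;\vec0)\}$. A walk stays in a region if all visited points lie in it. *)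

theory Defs
  imports Main
begin

text \<open>A tableau is a list of rows (row 0 is the top row); entries are naturals.
  Columns and rows are indexed from 1 in the paper; here row_of is 0-based
  (only comparisons are used) and col_of is 1-based.\<close>

definition is_SYT :: "nat list list \<Rightarrow> nat \<Rightarrow> bool" where
  "is_SYT T m \<longleftrightarrow>
     (\<forall>row\<in>set T. row \<noteq> []) \<and>
     (\<forall>i j. i < j \<and> j < length T \<longrightarrow> length (T!j) \<le> length (T!i)) \<and>
     distinct (concat T) \<and> set (concat T) = {1..m} \<and>
     (\<forall>i<length T. sorted_wrt (<) (T!i)) \<and>
     (\<forall>i j. Suc i < length T \<and> j < length (T!(Suc i)) \<longrightarrow> T!i!j < T!(Suc i)!j)"

definition shape :: "nat list list \<Rightarrow> nat list" where
  "shape T = map length T"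

definition SYT_set :: "nat \<Rightarrow> nat \<Rightarrow> nat list list set" where
  "SYT_set m d = {T. is_SYT T m \<and> (\<forall>row\<in>set T. length row \<le> d)}"

definition row_of :: "nat list list \<Rightarrow> nat \<Rightarrow> nat" where
  "row_of T x = (THE i. i < length T \<and> x \<in> set (T!i))"

definition col_of :: "nat list list \<Rightarrow> nat \<Rightarrow> nat" where
  "col_of T x = Suc (THE j. \<exists>i<length T. j < length (T!i) \<and> T!i!j = x)"

definition condT :: "nat \<Rightarrow> nat \<Rightarrow> nat list list \<Rightarrow> bool" where
  "condT n r T \<longleftrightarrow> (\<forall>i\<in>{1..n}. \<forall>s. 1 \<le> s \<and> s < r \<longrightarrow>
      row_of T (r*(i-1)+s) < row_of T (r*(i-1)+s+1))"

definition colseq :: "nat list list \<Rightarrow> nat \<Rightarrow> nat list" where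
  "colseq T m = map (col_of T) [1..<m+1]"

text \<open>A walk a_1..a_m | b_1..b_m is a pair of lists (as, bs); a_k = as!(k-1).
  Its steps are e_{a_1},...,e_{a_m},-e_{b_1},...,-e_{b_m}.\<close>
definition walk_steps :: "nat list \<times> nat list \<Rightarrow> (nat \<times> int) list" where
  "walk_steps w = map (\<lambda>a. (a, 1)) (fst w) @ map (\<lambda>b. (b, -1)) (snd w)"

definition walk_point :: "nat list \<times> nat list \<Rightarrow> nat \<Rightarrow> nat \<Rightarrow> int" where
  "walk_point w k j = (\<Sum>st\<leftarrow>take k (walk_steps w). if fst st = j then snd st else 0)"

definition W' :: "nat \<Rightarrow> nat \<Rightarrow> nat \<Rightarrow> (nat list \<times> nat list) set" where
  "W' d n r = {(as, bs). length as = r*n \<and> length bs = r*n \<and>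
      set as \<subseteq> {1..d} \<and> set bs \<subseteq> {1..d} \<and>
      (\<forall>j\<in>{1..d}. walk_point (as, bs) (2*(r*n)) j = 0) \<and>
      (\<forall>i\<in>{1..n}. \<forall>s. 1 \<le> s \<and> s < r \<longrightarrow>
          as!(r*(i-1)+s-1) \<ge> as!(r*(i-1)+s) \<and> bs!(r*(i-1)+s-1) \<ge> bs!(r*(i-1)+s))}"

definition W_tilde :: "nat \<Rightarrow> nat \<Rightarrow> nat \<Rightarrow> (nat list \<times> nat list) set" where
  "W_tilde d n r = (\<lambda>(as, bs). (as, rev bs)) ` W' d n r"

definition stays_in_chamber :: "nat \<Rightarrow> nat list \<times> nat list \<Rightarrow> bool" where
  "stays_in_chamber d w \<longleftrightarrow>
     (\<forall>k \<le> length (fst w) + length (snd w). \<forall>j. 1 \<le> j \<and> j < d \<longrightarrow>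
        walk_point w k j \<ge> walk_point w k (Suc j))"

end

(*
  Reading a standard Young tableau column by column, i.e. recording the column c_x of each entry
  x = 1, ..., m, is a bijection from tableaux with at most d columns onto lattice words over
  {1..d}, words in which every prefix contains at least as many letters j as letters j+1: the
  tableau is recovered by listing the positions of the letter j, in increasing order, down
  column j, and the lattice property is exactly what makes its rows increase.  Under this
  bijection the shape corresponds to the content (column j has as many cells as there are
  letters j), and condition (T), "x+1 lies strictly below x", becomes c_(x+1) <= c_x, the
  monotonicity required of walks in W'.  Finally, the walk c | rev c' returns to the origin iff
  c and c' have the same content, and then t steps into its second half it sits at the content
  vector of the prefix of c' of length |c'| - t; so it stays in the chamber x_1 >= ... >= x_d
  iff both c and c' are lattice words.
*)
theory Submission
  imports Defs
begin

lemma down_closed_eq_lessThan_card: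
  fixes S :: "nat set"
  assumes "finite S" and "\<And>a b. a \<le> b \<Longrightarrow> b \<in> S \<Longrightarrow> a \<in> S"
  shows "S = {..<card S}"
proof (cases "S = {}")
  case False
  have "S = {..Max S}"
    using assms Max_ge Max_in[OF assms(1) False] by fastforce
  then show ?thesis by (metis card_atMost lessThan_Suc_atMost)
qed simp

lemma all_le_add_iff:
  fixes a b :: nat
  shows "(\<forall>k \<le> a + b. P k) \<longleftrightarrow> (\<forall>k \<le> a. P k) \<and> (\<forall>t \<le> b. P (a + t))"
proof (intro iffI allI impI)
  fix k assume H: "(\<forall>k \<le> a. P k) \<and> (\<forall>t \<le> b. P (a + t))" and "k \<le> a + b"
  show "P k"
  proof (cases "k \<le> a")
    case False
    with \<open>k \<le> a + b\<close> have "k = a + (k - a)" "k - a \<le> b" by simp_all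
    with H show ?thesis by metis
  qed (use H in simp)
qed simp

lemma all_le_diff_iff:
  fixes b :: nat
  shows "(\<forall>t \<le> b. Q (b - t)) \<longleftrightarrow> (\<forall>k \<le> b. Q k)"
proof (intro iffI allI impI)
  fix k assume "\<forall>t \<le> b. Q (b - t)" "k \<le> b"
  moreover from this have "b - (b - k) = k" by simp
  ultimately show "Q k" by (metis diff_le_self)
qed simp

lemma count_list_take:
  "count_list (take k xs) x = card {p. p < k \<and> p < length xs \<and> xs ! p = x}"
  unfolding count_list_eq_length_filter length_filter_conv_card
  by (intro arg_cong[where f = card]) auto

lemma count_list_conv_card: "count_list xs x = card {p. p < length xs \<and> xs ! p = x}"
  using count_list_take[of "length xs" xs x] by simp

lemma card_less_nth_if_strict_sorted:
  fixes xs :: "'a::linorder list"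
  assumes "sorted_wrt (<) xs" "i < length xs"
  shows "card {z \<in> set xs. z < xs ! i} = i"
proof -
  have split: "xs = take i xs @ xs ! i # drop (Suc i) xs"
    using assms(2) by (rule id_take_nth_drop)
  have "sorted_wrt (<) (take i xs @ xs ! i # drop (Suc i) xs)"
    using assms(1) split by simp
  then have "\<forall>z\<in>set (take i xs). z < xs ! i" "\<forall>z\<in>set (drop (Suc i) xs). xs ! i < z"
    by (simp_all add: sorted_wrt_append)
  then have "{z \<in> set xs. z < xs ! i} = set (take i xs)"
    by (subst split) auto
  moreover have "distinct (take i xs)"
    using assms(1) by (simp add: strict_sorted_iff)
  ultimately show ?thesis using assms(2) by (simp add: distinct_card)
qed

lemma nth_less_if_less_card_less:
  fixes xs :: "'a::linorder list"
  assumes "sorted_wrt (<) xs" "i < card {z \<in> set xs. z < y}"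
  shows "i < length xs \<and> xs ! i < y"
proof
  have "card {z \<in> set xs. z < y} \<le> length xs"
    using card_mono[of "set xs" "{z \<in> set xs. z < y}"] card_length[of xs] by auto
  then show i: "i < length xs" using assms(2) by simp
  show "xs ! i < y"
  proof (rule ccontr)
    assume "\<not> xs ! i < y"
    then have "card {z \<in> set xs. z < y} \<le> card {z \<in> set xs. z < xs ! i}"
      by (intro card_mono) auto
    then show False using assms card_less_nth_if_strict_sorted[OF assms(1) i] by simp
  qed
qed

definition cells_unique :: "'a list list \<Rightarrow> bool" where
  "cells_unique xss \<longleftrightarrow> (\<forall>i j i' j'. i < length xss \<and> j < length (xss ! i) \<and> i' < length xss \<and>
     j' < length (xss ! i') \<and> xss ! i ! j = xss ! i' ! j' \<longrightarrow> i = i' \<and> j = j')"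

lemma cells_unique_Cons:
  "cells_unique (xs # xss) \<longleftrightarrow> distinct xs \<and> cells_unique xss \<and>
     (\<forall>j i' j'. j < length xs \<and> i' < length xss \<and> j' < length (xss ! i') \<longrightarrow> xs ! j \<noteq> xss ! i' ! j')"
    (is "?l \<longleftrightarrow> ?r")
proof
  assume l: ?l
  have "distinct xs"
    unfolding distinct_conv_nth using l[unfolded cells_unique_def, rule_format, of 0 _ 0] by auto
  moreover have "cells_unique xss"
    unfolding cells_unique_def using l[unfolded cells_unique_def, rule_format, of "Suc _" _ "Suc _"] by auto
  moreover have "xs ! j \<noteq> xss ! i' ! j'"
    if "j < length xs" "i' < length xss" "j' < length (xss ! i')" for j i' j'
    using l[unfolded cells_unique_def, rule_format, of 0 j "Suc i'" j'] that by auto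
  ultimately show ?r by blast
next
  assume ?r
  then show ?l
    unfolding cells_unique_def distinct_conv_nth
    by (intro allI impI, case_tac i; case_tac i') (auto, metis)
qed

lemma distinct_concat_iff_cells_unique: "distinct (concat xss) \<longleftrightarrow> cells_unique xss"
proof (induction xss)
  case (Cons xs xss)
  have "set xs \<inter> set (concat xss) = {} \<longleftrightarrow>
      (\<forall>j i' j'. j < length xs \<and> i' < length xss \<and> j' < length (xss ! i') \<longrightarrow> xs ! j \<noteq> xss ! i' ! j')"
    by (fastforce simp: in_set_conv_nth)
  with Cons.IH show ?case by (simp add: cells_unique_Cons)
qed (simp add: cells_unique_def)

section \<open>Standard Young tableaux\<close>

context
  fixes T :: "nat list list" and m :: nat
  assumes SYT: "is_SYT T m"
begin

lemma SYT_row_strict: "i < length T \<Longrightarrow> j < j' \<Longrightarrow> j' < length (T ! i) \<Longrightarrow> T ! i ! j < T ! i ! j'"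
  using SYT unfolding is_SYT_def by (auto simp: sorted_wrt_iff_nth_less)

lemma SYT_row_length_antimono: "i \<le> i' \<Longrightarrow> i' < length T \<Longrightarrow> length (T ! i') \<le> length (T ! i)"
  using SYT unfolding is_SYT_def by (cases "i = i'") auto

lemma SYT_column_strict: "i < i' \<Longrightarrow> i' < length T \<Longrightarrow> j < length (T ! i') \<Longrightarrow> T ! i ! j < T ! i' ! j"
proof (induction i')
  case (Suc k)
  have step: "T ! k ! j < T ! Suc k ! j"
    using SYT Suc.prems unfolding is_SYT_def by auto
  show ?case
  proof (cases "i = k")
    case False
    have "j < length (T ! k)"
      using SYT_row_length_antimono[of k "Suc k"] Suc.prems by auto
    with False Suc show ?thesis using step by auto
  qed (use step in simp)
qed simp

lemma SYT_entry_mono: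
  assumes "i \<le> i'" "j \<le> j'" "i' < length T" "j' < length (T ! i')"
  shows "T ! i ! j \<le> T ! i' ! j'"
proof -
  have "j' < length (T ! i)" using assms SYT_row_length_antimono[of i i'] by simp
  then have "T ! i ! j \<le> T ! i ! j'"
    using assms SYT_row_strict[of i j j'] by (cases "j = j'") auto
  also have "\<dots> \<le> T ! i' ! j'"
    using assms SYT_column_strict[of i i' j'] by (cases "i = i'") auto
  finally show ?thesis .
qed

lemma SYT_entry_range: "i < length T \<Longrightarrow> j < length (T ! i) \<Longrightarrow> T ! i ! j \<in> {1..m}"
proof -
  assume "i < length T" "j < length (T ! i)"
  then have "T ! i ! j \<in> set (concat T)" by (auto intro!: bexI[of _ "T ! i"])
  then show ?thesis using SYT unfolding is_SYT_def by blast
qed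

lemma SYT_cells_unique: "cells_unique T"
  using SYT unfolding is_SYT_def distinct_concat_iff_cells_unique by blast

lemma SYT_cell_unique:
  "i < length T \<Longrightarrow> j < length (T ! i) \<Longrightarrow> i' < length T \<Longrightarrow> j' < length (T ! i') \<Longrightarrow>
   T ! i ! j = T ! i' ! j' \<Longrightarrow> i = i' \<and> j = j'"
  using SYT_cells_unique unfolding cells_unique_def by blast

lemma SYT_cell_exists:
  assumes "x \<in> {1..m}"
  obtains i j where "i < length T" "j < length (T ! i)" "T ! i ! j = x"
proof -
  have "x \<in> set (concat T)" using SYT assms unfolding is_SYT_def by blast
  then obtain row where "row \<in> set T" "x \<in> set row" by auto
  then show ?thesis using that by (metis in_set_conv_nth)
qed

lemma col_of_SYT_cell:
  assumes "i < length T" "j < length (T ! i)"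
  shows "col_of T (T ! i ! j) = Suc j"
proof -
  have "(THE j'. \<exists>i'<length T. j' < length (T ! i') \<and> T ! i' ! j' = T ! i ! j) = j"
    using assms SYT_cell_unique by (intro the_equality) (blast, metis)
  then show ?thesis unfolding col_of_def by simp
qed

lemma row_of_SYT_cell:
  assumes "i < length T" "j < length (T ! i)"
  shows "row_of T (T ! i ! j) = i"
proof -
  have "(THE i'. i' < length T \<and> T ! i ! j \<in> set (T ! i')) = i"
    using assms SYT_cell_unique by (intro the_equality) (simp, metis in_set_conv_nth)
  then show ?thesis unfolding row_of_def by simp
qed

end

lemma length_colseq [simp]: "length (colseq T m) = m"
  unfolding colseq_def by simp

lemma colseq_nth: "p < m \<Longrightarrow> colseq T m ! p = col_of T (Suc p)"
  unfolding colseq_def by (simp del: upt_Suc add: nth_upt)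

section \<open>Lattice words and the inverse of column reading\<close>

definition lattice_word :: "nat \<Rightarrow> nat list \<Rightarrow> bool" where
  "lattice_word d w \<longleftrightarrow> set w \<subseteq> {1..d} \<and>
     (\<forall>k \<le> length w. \<forall>j. 1 \<le> j \<and> j < d \<longrightarrow> count_list (take k w) (Suc j) \<le> count_list (take k w) j)"

definition letter_positions :: "nat list \<Rightarrow> nat \<Rightarrow> nat list" where
  "letter_positions w j = sorted_list_of_set {p. p < length w \<and> w ! p = j}"

text \<open>Column jj (counted from 0) lists the positions of the letter jj+1 in increasing order,
  shifted by one because positions are counted from 0 and entries from 1; row i therefore has a
  cell for each letter occurring more than i times.\<close>
definition tableau_of_word :: "nat \<Rightarrow> nat list \<Rightarrow> nat list list" where
  "tableau_of_word d w =
     map (\<lambda>i. map (\<lambda>jj. Suc (letter_positions w (Suc jj) ! i))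
                  [0..<card {jj. jj < d \<and> i < count_list w (Suc jj)}])
       [0..<count_list w 1]"


lemma set_letter_positions: "set (letter_positions w j) = {p. p < length w \<and> w ! p = j}"
  unfolding letter_positions_def by simp

lemma sorted_letter_positions: "sorted_wrt (<) (letter_positions w j)"
  unfolding letter_positions_def by simp

lemma length_letter_positions: "length (letter_positions w j) = count_list w j"
  unfolding letter_positions_def by (simp add: count_list_conv_card)

lemma letter_positions_nth:
  assumes "i < count_list w j"
  shows "letter_positions w j ! i < length w" "w ! (letter_positions w j ! i) = j"
  using nth_mem[of i "letter_positions w j"] assms
  by (simp_all add: length_letter_positions set_letter_positions)

lemma count_list_take_letter_positions:
  "count_list (take k w) j = card {z \<in> set (letter_positions w j). z < k}"
  unfolding count_list_take set_letter_positions by (rule arg_cong[where f = card]) auto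

lemma letter_positions_lattice_step:
  assumes w: "lattice_word d w" and j: "1 \<le> j" "j < d" and i: "i < count_list w (Suc j)"
  shows "i < count_list w j \<and> letter_positions w j ! i < letter_positions w (Suc j) ! i"
proof -
  define y where "y = letter_positions w (Suc j) ! i"
  have y: "y < length w" "w ! y = Suc j"
    using letter_positions_nth[OF i] unfolding y_def by simp_all
  have "{z \<in> set (letter_positions w (Suc j)). z < Suc y} =
      insert y {z \<in> set (letter_positions w (Suc j)). z < y}"
    using y by (auto simp: set_letter_positions)
  then have "count_list (take (Suc y) w) (Suc j) = Suc i"
    using card_less_nth_if_strict_sorted[OF sorted_letter_positions, of i w "Suc j"] i
    by (simp add: count_list_take_letter_positions length_letter_positions y_def)
  moreover have "count_list (take (Suc y) w) (Suc j) \<le> count_list (take (Suc y) w) j"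
    using w j y unfolding lattice_word_def by simp
  moreover have "{z \<in> set (letter_positions w j). z < Suc y} = {z \<in> set (letter_positions w j). z < y}"
    using y by (auto simp: set_letter_positions less_Suc_eq)
  ultimately have "i < card {z \<in> set (letter_positions w j). z < y}"
    by (simp add: count_list_take_letter_positions)
  then show ?thesis
    using nth_less_if_less_card_less[OF sorted_letter_positions] unfolding y_def
    by (simp add: length_letter_positions)
qed

lemma letter_positions_lattice:
  assumes w: "lattice_word d w"
  shows "a < b \<Longrightarrow> b < d \<Longrightarrow> i < count_list w (Suc b) \<Longrightarrow>
    i < count_list w (Suc a) \<and> letter_positions w (Suc a) ! i < letter_positions w (Suc b) ! i"
proof (induction b)
  case (Suc b)
  have step: "i < count_list w (Suc b) \<and> letter_positions w (Suc b) ! i < letter_positions w (Suc (Suc b)) ! i"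
    using letter_positions_lattice_step[OF w, of "Suc b" i] Suc.prems by simp
  show ?case
  proof (cases "a = b")
    case False
    with Suc.prems have "a < b" by simp
    with Suc.IH step Suc.prems show ?thesis by force
  qed (use step in simp)
qed simp

lemma count_list_lattice_mono:
  assumes "lattice_word d w" "a \<le> b" "b < d" "i < count_list w (Suc b)"
  shows "i < count_list w (Suc a)"
  using letter_positions_lattice[OF assms(1), of a b i] assms(2-) by (cases "a = b") auto

lemma length_tableau_of_word: "length (tableau_of_word d w) = count_list w 1"
  unfolding tableau_of_word_def by simp

lemma length_tableau_of_word_row:
  "i < count_list w 1 \<Longrightarrow> length (tableau_of_word d w ! i) = card {jj. jj < d \<and> i < count_list w (Suc jj)}"
  unfolding tableau_of_word_def by simp

lemma tableau_of_word_nth: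
  assumes "i < length (tableau_of_word d w)" "jj < length (tableau_of_word d w ! i)"
  shows "tableau_of_word d w ! i ! jj = Suc (letter_positions w (Suc jj) ! i)"
  using assms unfolding tableau_of_word_def by simp

context
  fixes d :: nat and w :: "nat list"
  assumes w: "lattice_word d w"
begin

lemma columns_reaching_row:
  "{jj. jj < d \<and> i < count_list w (Suc jj)} = {..<card {jj. jj < d \<and> i < count_list w (Suc jj)}}"
proof (rule down_closed_eq_lessThan_card)
  fix a b assume "a \<le> b" "b \<in> {jj. jj < d \<and> i < count_list w (Suc jj)}"
  then show "a \<in> {jj. jj < d \<and> i < count_list w (Suc jj)}"
    using count_list_lattice_mono[OF w, of a b i] by auto
qed simp

lemma tableau_of_word_cell:
  "i < length (tableau_of_word d w) \<and> jj < length (tableau_of_word d w ! i) \<longleftrightarrow>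
    jj < d \<and> i < count_list w (Suc jj)"
proof
  assume cell: "i < length (tableau_of_word d w) \<and> jj < length (tableau_of_word d w ! i)"
  then have "i < count_list w 1" by (simp add: length_tableau_of_word)
  with cell have "jj \<in> {..<card {jj. jj < d \<and> i < count_list w (Suc jj)}}"
    using length_tableau_of_word_row by simp
  then show "jj < d \<and> i < count_list w (Suc jj)"
    using columns_reaching_row by blast
next
  assume cell: "jj < d \<and> i < count_list w (Suc jj)"
  then have "i < count_list w 1"
    using count_list_lattice_mono[OF w, of 0 jj i] by simp
  moreover have "jj < card {jj. jj < d \<and> i < count_list w (Suc jj)}"
    using cell columns_reaching_row[of i] by blast
  ultimately show "i < length (tableau_of_word d w) \<and> jj < length (tableau_of_word d w ! i)"
    using length_tableau_of_word_row by (simp add: length_tableau_of_word)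
qed

lemma tableau_of_word_cell_of_position:
  assumes "p < length w"
  obtains i jj where "i < length (tableau_of_word d w)" "jj < length (tableau_of_word d w ! i)"
    "tableau_of_word d w ! i ! jj = Suc p" "w ! p = Suc jj"
proof -
  have "w ! p \<in> {1..d}" using w assms nth_mem unfolding lattice_word_def by blast
  then obtain jj where jj: "w ! p = Suc jj" "jj < d" by (cases "w ! p") auto
  then have "p \<in> set (letter_positions w (Suc jj))"
    using assms by (simp add: set_letter_positions)
  then obtain i where i: "i < count_list w (Suc jj)" "letter_positions w (Suc jj) ! i = p"
    by (auto simp: in_set_conv_nth length_letter_positions)
  with jj have "i < length (tableau_of_word d w) \<and> jj < length (tableau_of_word d w ! i)"
    using tableau_of_word_cell by simp
  with that jj i show ?thesis using tableau_of_word_nth by auto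
qed

lemma tableau_of_word_row_nonempty:
  assumes "row \<in> set (tableau_of_word d w)"
  shows "row \<noteq> []"
proof -
  obtain i where i: "i < length (tableau_of_word d w)" "row = tableau_of_word d w ! i"
    using assms by (auto simp: in_set_conv_nth)
  then have "count_list w 1 \<noteq> 0" by (simp only: length_tableau_of_word)
  then have "1 \<in> set w" by (simp only: count_list_0_iff not_not)
  then have "0 < d" using w unfolding lattice_word_def by auto
  with i tableau_of_word_cell[of i 0] show ?thesis by (auto simp: length_tableau_of_word)
qed

lemma tableau_of_word_row_length_antimono:
  assumes "i < i'" "i' < length (tableau_of_word d w)"
  shows "length (tableau_of_word d w ! i') \<le> length (tableau_of_word d w ! i)"
proof -
  have "{jj. jj < d \<and> i' < count_list w (Suc jj)} \<subseteq> {jj. jj < d \<and> i < count_list w (Suc jj)}"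
    using assms by auto
  then show ?thesis
    using assms length_tableau_of_word_row by (simp add: length_tableau_of_word card_mono)
qed

lemma cells_unique_tableau_of_word: "cells_unique (tableau_of_word d w)"
  unfolding cells_unique_def
proof (intro allI impI)
  let ?T = "tableau_of_word d w"
  fix i jj i' jj' assume a: "i < length ?T \<and> jj < length (?T ! i) \<and> i' < length ?T \<and>
    jj' < length (?T ! i') \<and> ?T ! i ! jj = ?T ! i' ! jj'"
  then have pos: "letter_positions w (Suc jj) ! i = letter_positions w (Suc jj') ! i'"
    using tableau_of_word_nth[of i d w jj] tableau_of_word_nth[of i' d w jj'] by (metis Suc_inject)
  have i: "i < count_list w (Suc jj)" and i': "i' < count_list w (Suc jj')"
    using a tableau_of_word_cell by blast+
  have "Suc jj = w ! (letter_positions w (Suc jj) ! i)"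
    using letter_positions_nth(2)[OF i] by simp
  also have "\<dots> = Suc jj'"
    using pos letter_positions_nth(2)[OF i'] by simp
  finally have "jj = jj'" by simp
  moreover have "distinct (letter_positions w (Suc jj))"
    using sorted_letter_positions strict_sorted_iff by blast
  ultimately show "i = i' \<and> jj = jj'"
    using pos i i' by (simp add: nth_eq_iff_index_eq length_letter_positions)
qed

lemma set_concat_tableau_of_word: "set (concat (tableau_of_word d w)) = {1..length w}"
proof (intro equalityI subsetI)
  let ?T = "tableau_of_word d w"
  fix x assume "x \<in> set (concat ?T)"
  then obtain i jj where ij: "i < length ?T" "jj < length (?T ! i)" and x: "x = ?T ! i ! jj"
    by (auto simp: in_set_conv_nth)
  then have "i < count_list w (Suc jj)" using tableau_of_word_cell by blast
  then show "x \<in> {1..length w}"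
    using x tableau_of_word_nth[OF ij] letter_positions_nth(1)[of i w "Suc jj"] by simp
next
  let ?T = "tableau_of_word d w"
  fix x assume "x \<in> {1..length w}"
  then have "x - 1 < length w" "x = Suc (x - 1)" by auto
  then obtain i jj where "i < length ?T" "jj < length (?T ! i)" "?T ! i ! jj = x"
    using tableau_of_word_cell_of_position by metis
  then show "x \<in> set (concat ?T)" by (auto intro!: bexI[of _ "?T ! i"])
qed

lemma tableau_of_word_row_sorted:
  assumes i: "i < length (tableau_of_word d w)"
  shows "sorted_wrt (<) (tableau_of_word d w ! i)"
  unfolding sorted_wrt_iff_nth_less
proof (intro allI impI)
  fix a b assume ab: "a < b" "b < length (tableau_of_word d w ! i)"
  then have "b < d" "i < count_list w (Suc b)" using i tableau_of_word_cell by blast+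
  then have "letter_positions w (Suc a) ! i < letter_positions w (Suc b) ! i"
    using letter_positions_lattice[OF w ab(1)] by blast
  then show "tableau_of_word d w ! i ! a < tableau_of_word d w ! i ! b"
    using ab tableau_of_word_nth[OF i] by simp
qed

lemma tableau_of_word_column_strict:
  assumes "Suc i < length (tableau_of_word d w)" "jj < length (tableau_of_word d w ! Suc i)"
  shows "tableau_of_word d w ! i ! jj < tableau_of_word d w ! Suc i ! jj"
proof -
  have "jj < d" "Suc i < count_list w (Suc jj)" using assms tableau_of_word_cell by blast+
  moreover from this have "i < length (tableau_of_word d w)" "jj < length (tableau_of_word d w ! i)"
    using tableau_of_word_cell[of i jj] by simp_all
  ultimately show ?thesis
    using assms tableau_of_word_nth sorted_wrt_nth_less[OF sorted_letter_positions, of i "Suc i" w "Suc jj"]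
    by (simp add: length_letter_positions)
qed

lemma is_SYT_tableau_of_word: "is_SYT (tableau_of_word d w) (length w)"
  unfolding is_SYT_def distinct_concat_iff_cells_unique
  using tableau_of_word_row_nonempty tableau_of_word_row_length_antimono cells_unique_tableau_of_word
    set_concat_tableau_of_word tableau_of_word_row_sorted tableau_of_word_column_strict
  by blast

lemma colseq_tableau_of_word: "colseq (tableau_of_word d w) (length w) = w"
proof (rule nth_equalityI)
  fix p assume "p < length (colseq (tableau_of_word d w) (length w))"
  then have p: "p < length w" by simp
  obtain i jj where cell: "i < length (tableau_of_word d w)" "jj < length (tableau_of_word d w ! i)"
    and "tableau_of_word d w ! i ! jj = Suc p" "w ! p = Suc jj"
    using tableau_of_word_cell_of_position[OF p] .
  then show "colseq (tableau_of_word d w) (length w) ! p = w ! p"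
    using p col_of_SYT_cell[OF is_SYT_tableau_of_word cell] by (simp add: colseq_nth)
qed simp

lemma tableau_of_word_in_SYT_set: "tableau_of_word d w \<in> SYT_set (length w) d"
proof -
  have "length row \<le> d" if row: "row \<in> set (tableau_of_word d w)" for row
  proof -
    obtain i where "i < length (tableau_of_word d w)" "row = tableau_of_word d w ! i"
      using row by (auto simp: in_set_conv_nth)
    then have "i < count_list w 1" "row = tableau_of_word d w ! i"
      by (simp_all only: length_tableau_of_word)
    moreover have "card {jj. jj < d \<and> i < count_list w (Suc jj)} \<le> card {..<d}"
      by (rule card_mono) auto
    ultimately show ?thesis using length_tableau_of_word_row by simp
  qed
  then show ?thesis unfolding SYT_set_def using is_SYT_tableau_of_word by blast
qed

end

section \<open>Column reading is a bijection\<close>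

context
  fixes T :: "nat list list" and m :: nat
  assumes SYT: "is_SYT T m"
begin

lemma colseq_positions_eq_image:
  assumes "k \<le> m"
  shows "{p. p < k \<and> p < m \<and> colseq T m ! p = Suc jj} =
    (\<lambda>i. T ! i ! jj - 1) ` {i. i < length T \<and> jj < length (T ! i) \<and> T ! i ! jj \<le> k}"
proof (intro equalityI subsetI)
  fix p assume p: "p \<in> {p. p < k \<and> p < m \<and> colseq T m ! p = Suc jj}"
  then have "Suc p \<in> {1..m}" by simp
  then obtain i j where ij: "i < length T" "j < length (T ! i)" "T ! i ! j = Suc p"
    by (rule SYT_cell_exists[OF SYT])
  with p have "j = jj" using col_of_SYT_cell[OF SYT ij(1,2)] colseq_nth[of p m T] by simp
  with ij p show "p \<in> (\<lambda>i. T ! i ! jj - 1) ` {i. i < length T \<and> jj < length (T ! i) \<and> T ! i ! jj \<le> k}"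
    by force
next
  fix p assume "p \<in> (\<lambda>i. T ! i ! jj - 1) ` {i. i < length T \<and> jj < length (T ! i) \<and> T ! i ! jj \<le> k}"
  then obtain i where "i < length T" "jj < length (T ! i)" "T ! i ! jj \<le> k" "p = T ! i ! jj - 1"
    by blast
  then show "p \<in> {p. p < k \<and> p < m \<and> colseq T m ! p = Suc jj}"
    using assms SYT_entry_range[OF SYT, of i jj] col_of_SYT_cell[OF SYT, of i jj]
    by (auto simp: colseq_nth)
qed

lemma count_list_take_colseq:
  assumes "k \<le> m"
  shows "count_list (take k (colseq T m)) (Suc jj) =
    card {i. i < length T \<and> jj < length (T ! i) \<and> T ! i ! jj \<le> k}"
proof -
  let ?rows = "{i. i < length T \<and> jj < length (T ! i) \<and> T ! i ! jj \<le> k}"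
  have "inj_on (\<lambda>i. T ! i ! jj - 1) ?rows"
  proof (rule inj_onI)
    fix a b assume "a \<in> ?rows" "b \<in> ?rows" "T ! a ! jj - 1 = T ! b ! jj - 1"
    moreover from this have "T ! a ! jj \<ge> 1" "T ! b ! jj \<ge> 1"
      using SYT_entry_range[OF SYT, of a jj] SYT_entry_range[OF SYT, of b jj] by auto
    ultimately show "a = b" using SYT_cell_unique[OF SYT, of a jj b jj] by auto
  qed
  then show ?thesis
    using colseq_positions_eq_image[OF assms] by (simp add: count_list_take card_image)
qed

lemma SYT_column_bounded:
  "{i. i < length T \<and> jj < length (T ! i) \<and> T ! i ! jj \<le> m} = {i. i < length T \<and> jj < length (T ! i)}"
  using SYT_entry_range[OF SYT] by auto

lemma rows_reaching_column:
  "{i. i < length T \<and> jj < length (T ! i)} = {..<count_list (colseq T m) (Suc jj)}"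
proof -
  have "count_list (colseq T m) (Suc jj) = card {i. i < length T \<and> jj < length (T ! i)}"
    using count_list_take_colseq[of m jj] SYT_column_bounded by simp
  moreover have "{i. i < length T \<and> jj < length (T ! i)} =
      {..<card {i. i < length T \<and> jj < length (T ! i)}}"
  proof (rule down_closed_eq_lessThan_card)
    fix a b assume "a \<le> b" "b \<in> {i. i < length T \<and> jj < length (T ! i)}"
    then show "a \<in> {i. i < length T \<and> jj < length (T ! i)}"
      using SYT_row_length_antimono[OF SYT, of a b] by auto
  qed simp
  ultimately show ?thesis by simp
qed

lemma letter_positions_colseq:
  "letter_positions (colseq T m) (Suc jj) = map (\<lambda>i. T ! i ! jj - 1) [0..<count_list (colseq T m) (Suc jj)]"
  unfolding letter_positions_def
proof (rule sorted_list_of_set_unique[THEN iffD1], simp, intro conjI)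
  let ?h = "count_list (colseq T m) (Suc jj)"
  show "sorted_wrt (<) (map (\<lambda>i. T ! i ! jj - 1) [0..<?h])"
    unfolding sorted_wrt_iff_nth_less
  proof (intro allI impI)
    fix a b assume "a < b" "b < length (map (\<lambda>i. T ! i ! jj - 1) [0..<?h])"
    moreover from this have "b < length T" "jj < length (T ! b)"
      using rows_reaching_column[of jj] by auto
    ultimately show "map (\<lambda>i. T ! i ! jj - 1) [0..<?h] ! a < map (\<lambda>i. T ! i ! jj - 1) [0..<?h] ! b"
      using SYT_column_strict[OF SYT, of a b jj] SYT_entry_range[OF SYT, of a jj]
        SYT_row_length_antimono[OF SYT, of a b] by auto
  qed
  show "set (map (\<lambda>i. T ! i ! jj - 1) [0..<?h]) = {p. p < length (colseq T m) \<and> colseq T m ! p = Suc jj}"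
    using colseq_positions_eq_image[of m jj] SYT_column_bounded rows_reaching_column[of jj] by auto
  show "length (map (\<lambda>i. T ! i ! jj - 1) [0..<?h]) = card {p. p < length (colseq T m) \<and> colseq T m ! p = Suc jj}"
    by (simp add: count_list_conv_card)
qed

end

context
  fixes T :: "nat list list" and m d :: nat
  assumes T: "T \<in> SYT_set m d"
begin

lemma SYT_set_D: "is_SYT T m" "\<And>i. i < length T \<Longrightarrow> length (T ! i) \<le> d"
  using T unfolding SYT_set_def by auto

lemma lattice_word_colseq: "lattice_word d (colseq T m)"
  unfolding lattice_word_def
proof (intro conjI subsetI allI impI)
  fix y assume "y \<in> set (colseq T m)"
  then obtain p where "p < m" "y = colseq T m ! p"
    by (auto simp: in_set_conv_nth)
  then have p: "Suc p \<in> {1..m}" "y = col_of T (Suc p)" by (simp_all add: colseq_nth)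
  obtain i j where ij: "i < length T" "j < length (T ! i)" "T ! i ! j = Suc p"
    using SYT_cell_exists[OF SYT_set_D(1) p(1)] by blast
  then have "y = Suc j" using p(2) col_of_SYT_cell[OF SYT_set_D(1)] by metis
  then show "y \<in> {1..d}" using ij SYT_set_D(2)[of i] by simp
next
  fix k j assume k: "k \<le> length (colseq T m)" and j: "1 \<le> j \<and> j < d"
  then obtain jj where jj: "j = Suc jj" by (cases j) auto
  have "card {i. i < length T \<and> Suc jj < length (T ! i) \<and> T ! i ! Suc jj \<le> k}
      \<le> card {i. i < length T \<and> jj < length (T ! i) \<and> T ! i ! jj \<le> k}"
  proof (rule card_mono)
    show "{i. i < length T \<and> Suc jj < length (T ! i) \<and> T ! i ! Suc jj \<le> k}
        \<subseteq> {i. i < length T \<and> jj < length (T ! i) \<and> T ! i ! jj \<le> k}"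
      using SYT_row_strict[OF SYT_set_D(1), of _ jj "Suc jj"] by fastforce
  qed simp
  then show "count_list (take k (colseq T m)) (Suc j) \<le> count_list (take k (colseq T m)) j"
    using k jj count_list_take_colseq[OF SYT_set_D(1)] by simp
qed

lemma tableau_of_word_colseq: "tableau_of_word d (colseq T m) = T"
proof (rule nth_equalityI)
  note SYT = SYT_set_D(1)
  have "\<forall>row\<in>set T. row \<noteq> []" using SYT unfolding is_SYT_def by blast
  then have "{..<length T} = {i. i < length T \<and> 0 < length (T ! i)}" by auto
  then have "count_list (colseq T m) 1 = length T"
    using rows_reaching_column[OF SYT, of 0] by simp
  then show length: "length (tableau_of_word d (colseq T m)) = length T"
    unfolding tableau_of_word_def by simp
  fix i assume "i < length (tableau_of_word d (colseq T m))"
  then have i: "i < length T" "i < count_list (colseq T m) 1" using length \<open>count_list _ 1 = _\<close> by simp_all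
  have reach: "i < count_list (colseq T m) (Suc jj) \<longleftrightarrow> jj < length (T ! i)" for jj
  proof -
    have "i \<in> {i. i < length T \<and> jj < length (T ! i)} \<longleftrightarrow> i \<in> {..<count_list (colseq T m) (Suc jj)}"
      using rows_reaching_column[OF SYT, of jj] by simp
    then show ?thesis using i by simp
  qed
  have "{jj. jj < d \<and> i < count_list (colseq T m) (Suc jj)} = {..<length (T ! i)}"
    unfolding reach using SYT_set_D(2)[OF i(1)] by auto
  then have row: "tableau_of_word d (colseq T m) ! i =
      map (\<lambda>jj. Suc (letter_positions (colseq T m) (Suc jj) ! i)) [0..<length (T ! i)]"
    using i(2) unfolding tableau_of_word_def by simp
  show "tableau_of_word d (colseq T m) ! i = T ! i"
  proof (rule nth_equalityI)
    fix jj assume "jj < length (tableau_of_word d (colseq T m) ! i)"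
    then have "jj < length (T ! i)" using row by simp
    moreover from this have "i < count_list (colseq T m) (Suc jj)" using reach by simp
    ultimately show "tableau_of_word d (colseq T m) ! i ! jj = T ! i ! jj"
      using row SYT_entry_range[OF SYT i(1), of jj] by (simp add: letter_positions_colseq[OF SYT])
  qed (simp add: row)
qed

end

lemma bij_betw_colseq:
  "bij_betw (\<lambda>T. colseq T m) (SYT_set m d) {w. length w = m \<and> lattice_word d w}"
proof (rule bij_betw_byWitness[where f' = "tableau_of_word d"]; intro ballI image_subsetI)
  fix T assume "T \<in> SYT_set m d"
  then show "tableau_of_word d (colseq T m) = T"
    and "colseq T m \<in> {w. length w = m \<and> lattice_word d w}"
    by (simp_all add: tableau_of_word_colseq lattice_word_colseq)
next
  fix w assume "w \<in> {w. length w = m \<and> lattice_word d w}"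
  then show "colseq (tableau_of_word d w) m = w" and "tableau_of_word d w \<in> SYT_set m d"
    using colseq_tableau_of_word[of d w] tableau_of_word_in_SYT_set[of d w] by auto
qed

lemma count_list_colseq_shape:
  assumes "is_SYT T m"
  shows "count_list (colseq T m) (Suc jj) = card {i. i < length (shape T) \<and> jj < shape T ! i}"
proof -
  have "{i. i < length (shape T) \<and> jj < shape T ! i} = {i. i < length T \<and> jj < length (T ! i)}"
    unfolding shape_def by auto
  then show ?thesis using rows_reaching_column[OF assms, of jj] by simp
qed

lemma shape_tableau_of_word:
  "shape (tableau_of_word d w) = map (\<lambda>i. card {jj. jj < d \<and> i < count_list w (Suc jj)}) [0..<count_list w 1]"
  unfolding shape_def tableau_of_word_def by simp

lemma shape_eq_iff_count_list_colseq_eq: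
  assumes P: "P \<in> SYT_set m d" and Q: "Q \<in> SYT_set m d"
  shows "shape P = shape Q \<longleftrightarrow> (\<forall>j\<in>{1..d}. count_list (colseq P m) j = count_list (colseq Q m) j)"
proof
  assume shape: "shape P = shape Q"
  show "\<forall>j\<in>{1..d}. count_list (colseq P m) j = count_list (colseq Q m) j"
  proof
    fix j assume "j \<in> {1..d}"
    then obtain jj where "j = Suc jj" by (cases j) auto
    then show "count_list (colseq P m) j = count_list (colseq Q m) j"
      using count_list_colseq_shape[OF SYT_set_D(1)[OF P], of jj]
        count_list_colseq_shape[OF SYT_set_D(1)[OF Q], of jj] shape by simp
  qed
next
  assume eq: "\<forall>j\<in>{1..d}. count_list (colseq P m) j = count_list (colseq Q m) j"
  have "set (colseq P m) \<subseteq> {1..d}" "set (colseq Q m) \<subseteq> {1..d}"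
    using lattice_word_colseq[OF P] lattice_word_colseq[OF Q] unfolding lattice_word_def by auto
  then have "count_list (colseq P m) j = count_list (colseq Q m) j" for j
  proof (cases "j \<in> {1..d}")
    case False
    with \<open>set (colseq P m) \<subseteq> {1..d}\<close> \<open>set (colseq Q m) \<subseteq> {1..d}\<close> show ?thesis
      by (metis count_notin subsetD)
  qed (use eq in blast)
  then have "shape (tableau_of_word d (colseq P m)) = shape (tableau_of_word d (colseq Q m))"
    by (simp add: shape_tableau_of_word)
  then show "shape P = shape Q"
    by (simp add: tableau_of_word_colseq[OF P] tableau_of_word_colseq[OF Q])
qed

section \<open>Condition (T) and descents\<close>

definition descending_in_blocks :: "nat \<Rightarrow> nat \<Rightarrow> nat list \<Rightarrow> bool" where
  "descending_in_blocks n r w \<longleftrightarrow>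
     (\<forall>i\<in>{1..n}. \<forall>s. 1 \<le> s \<and> s < r \<longrightarrow> w ! (r*(i-1)+s-1) \<ge> w ! (r*(i-1)+s))"

lemma row_of_less_iff_col_of_le:
  assumes SYT: "is_SYT T m" and "1 \<le> x" "x < m"
  shows "row_of T x < row_of T (Suc x) \<longleftrightarrow> col_of T (Suc x) \<le> col_of T x"
proof -
  obtain i j where c: "i < length T" "j < length (T ! i)" "T ! i ! j = x"
    using SYT_cell_exists[OF SYT, of x] assms by auto
  obtain i' j' where c': "i' < length T" "j' < length (T ! i')" "T ! i' ! j' = Suc x"
    using SYT_cell_exists[OF SYT, of "Suc x"] assms by auto
  have "i < i' \<longleftrightarrow> j' \<le> j"
  proof
    assume "i < i'"
    show "j' \<le> j"
    proof (rule ccontr)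
      assume "\<not> j' \<le> j"
      moreover have "j' < length (T ! i)"
        using SYT_row_length_antimono[OF SYT, of i i'] \<open>i < i'\<close> c' by simp
      ultimately have "x < T ! i ! j'" using SYT_row_strict[OF SYT c(1), of j j'] c by simp
      moreover have "T ! i ! j' < Suc x" using SYT_column_strict[OF SYT \<open>i < i'\<close> c'(1,2)] c' by simp
      ultimately show False by simp
    qed
  next
    assume "j' \<le> j"
    show "i < i'"
    proof (rule ccontr)
      assume "\<not> i < i'"
      then have "T ! i' ! j' \<le> T ! i ! j" using SYT_entry_mono[OF SYT _ \<open>j' \<le> j\<close> c(1,2)] by simp
      then show False using c c' by simp
    qed
  qed
  moreover have "row_of T x = i" "col_of T x = Suc j"
    using row_of_SYT_cell[OF SYT c(1,2)] col_of_SYT_cell[OF SYT c(1,2)] c(3) by simp_all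
  moreover have "row_of T (Suc x) = i'" "col_of T (Suc x) = Suc j'"
    using row_of_SYT_cell[OF SYT c'(1,2)] col_of_SYT_cell[OF SYT c'(1,2)] c'(3) by simp_all
  ultimately show ?thesis by simp
qed

lemma condT_iff_descending_in_blocks:
  assumes "is_SYT T (r*n)"
  shows "condT n r T \<longleftrightarrow> descending_in_blocks n r (colseq T (r*n))"
proof -
  have "row_of T (r*(i-1)+s) < row_of T (r*(i-1)+s+1) \<longleftrightarrow>
      colseq T (r*n) ! (r*(i-1)+s-1) \<ge> colseq T (r*n) ! (r*(i-1)+s)"
    if "i \<in> {1..n}" "1 \<le> s" "s < r" for i s
  proof -
    define x where "x = r*(i-1)+s"
    have "r*(i-1) + r = r*i" using that by (cases i) auto
    also have "\<dots> \<le> r*n" using that by simp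
    finally have "r*(i-1) + r \<le> r*n" .
    then have x: "1 \<le> x" "x < r*n" using that unfolding x_def by linarith+
    then have "colseq T (r*n) ! (x - 1) = col_of T x" "colseq T (r*n) ! x = col_of T (Suc x)"
      using colseq_nth[of "x - 1" "r*n" T] colseq_nth[of x "r*n" T] by simp_all
    then show ?thesis
      using row_of_less_iff_col_of_le[OF assms x] unfolding x_def by simp
  qed
  then show ?thesis unfolding condT_def descending_in_blocks_def by auto
qed

section \<open>Walks in the Weyl chamber\<close>

lemma sum_list_coordinate_steps:
  "sum_list (map ((\<lambda>st. if fst st = j then snd st else 0) \<circ> (\<lambda>a. (a, v))) xs) = v * int (count_list xs j)"
  by (induction xs) (auto simp: algebra_simps)

lemma walk_point_forward:
  "k \<le> length as \<Longrightarrow> walk_point (as, bs) k j = int (count_list (take k as) j)"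
  unfolding walk_point_def walk_steps_def by (simp add: take_map sum_list_coordinate_steps)

lemma walk_point_backward:
  "walk_point (as, bs) (length as + t) j = int (count_list as j) - int (count_list (take t bs) j)"
  unfolding walk_point_def walk_steps_def by (simp add: take_map sum_list_coordinate_steps)

lemma walk_point_backward_rev:
  assumes "t \<le> length bs" "count_list as j = count_list bs j"
  shows "walk_point (as, rev bs) (length as + t) j = int (count_list (take (length bs - t) bs) j)"
proof -
  have "take t (rev bs) = rev (drop (length bs - t) bs)" by (simp add: take_rev)
  moreover have "count_list bs j = count_list (take (length bs - t) bs) j + count_list (drop (length bs - t) bs) j"
    by (metis append_take_drop_id count_list_append)
  ultimately show ?thesis using assms(2) by (simp add: walk_point_backward)
qed

lemma stays_in_chamber_iff_lattice_words:
  assumes "set as \<subseteq> {1..d}" "set bs \<subseteq> {1..d}" and content: "\<forall>j\<in>{1..d}. count_list as j = count_list bs j"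
  shows "stays_in_chamber d (as, rev bs) \<longleftrightarrow> lattice_word d as \<and> lattice_word d bs"
proof -
  let ?ballot = "\<lambda>w k. \<forall>j. 1 \<le> j \<and> j < d \<longrightarrow> count_list (take k w) (Suc j) \<le> count_list (take k w) j"
  let ?inside = "\<lambda>k. \<forall>j. 1 \<le> j \<and> j < d \<longrightarrow> walk_point (as, rev bs) k (Suc j) \<le> walk_point (as, rev bs) k j"
  have forward: "?inside k \<longleftrightarrow> ?ballot as k" if "k \<le> length as" for k
    using that by (simp add: walk_point_forward)
  have backward: "?inside (length as + t) \<longleftrightarrow> ?ballot bs (length bs - t)" if "t \<le> length bs" for t
  proof -
    have "walk_point (as, rev bs) (length as + t) j = int (count_list (take (length bs - t) bs) j)"
      if "1 \<le> j" "j \<le> d" for j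
      using walk_point_backward_rev[OF \<open>t \<le> length bs\<close>] content that by simp
    then have "1 \<le> j \<and> j < d \<longrightarrow>
        (walk_point (as, rev bs) (length as + t) (Suc j) \<le> walk_point (as, rev bs) (length as + t) j \<longleftrightarrow>
         count_list (take (length bs - t) bs) (Suc j) \<le> count_list (take (length bs - t) bs) j)" for j
      by simp
    then show ?thesis by blast
  qed
  have "(\<forall>k \<le> length as + length bs. ?inside k) \<longleftrightarrow>
      (\<forall>k \<le> length as. ?ballot as k) \<and> (\<forall>t \<le> length bs. ?ballot bs (length bs - t))"
    unfolding all_le_add_iff using forward backward by simp
  also have "\<dots> \<longleftrightarrow> (\<forall>k \<le> length as. ?ballot as k) \<and> (\<forall>k \<le> length bs. ?ballot bs k)"
    using all_le_diff_iff[where Q = "?ballot bs" and b = "length bs"] by simp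
  finally show ?thesis
    unfolding stays_in_chamber_def lattice_word_def using assms(1,2) by simp
qed

lemma mem_W'_iff:
  "(as, bs) \<in> W' d n r \<longleftrightarrow>
    length as = r*n \<and> length bs = r*n \<and> set as \<subseteq> {1..d} \<and> set bs \<subseteq> {1..d} \<and>
    (\<forall>j\<in>{1..d}. count_list as j = count_list bs j) \<and>
    descending_in_blocks n r as \<and> descending_in_blocks n r bs"
proof -
  have "walk_point (as, bs) (2*(r*n)) j = int (count_list as j) - int (count_list bs j)"
    if "length as = r*n" "length bs = r*n" for j
    using that walk_point_backward[of as bs "r*n" j] by (simp add: mult_2)
  then show ?thesis unfolding W'_def descending_in_blocks_def by auto
qed

lemma chamber_walks_eq:
  fixes d n r :: nat
  defines "L \<equiv> {w. length w = r*n \<and> lattice_word d w \<and> descending_in_blocks n r w}"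
  shows "{w \<in> W_tilde d n r. stays_in_chamber d w} =
    {(u, v). u \<in> L \<and> v \<in> rev ` L \<and> (\<forall>j\<in>{1..d}. count_list u j = count_list v j)}"
proof (intro equalityI subsetI)
  fix w assume "w \<in> {w \<in> W_tilde d n r. stays_in_chamber d w}"
  then obtain as bs where w: "w = (as, rev bs)" "(as, bs) \<in> W' d n r" "stays_in_chamber d (as, rev bs)"
    unfolding W_tilde_def by auto
  then show "w \<in> {(u, v). u \<in> L \<and> v \<in> rev ` L \<and> (\<forall>j\<in>{1..d}. count_list u j = count_list v j)}"
    unfolding mem_W'_iff L_def using stays_in_chamber_iff_lattice_words by auto
next
  fix w assume "w \<in> {(u, v). u \<in> L \<and> v \<in> rev ` L \<and> (\<forall>j\<in>{1..d}. count_list u j = count_list v j)}"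
  then obtain as bs where w: "w = (as, rev bs)" "as \<in> L" "bs \<in> L"
    and content: "\<forall>j\<in>{1..d}. count_list as j = count_list bs j"
    by auto
  then have "(as, bs) \<in> W' d n r"
    unfolding mem_W'_iff L_def lattice_word_def by auto
  moreover have "stays_in_chamber d (as, rev bs)"
    using w content stays_in_chamber_iff_lattice_words unfolding L_def lattice_word_def by auto
  ultimately show "w \<in> {w \<in> W_tilde d n r. stays_in_chamber d w}"
    unfolding W_tilde_def using w(1) by force
qed

theorem corollary1:
  fixes n r d :: nat
  assumes "n \<ge> 1" "r \<ge> 1" "d \<ge> 1"
  shows "bij_betw (\<lambda>(P, Q). (colseq P (r*n), rev (colseq Q (r*n))))
           {(P, Q). P \<in> SYT_set (r*n) d \<and> Q \<in> SYT_set (r*n) d \<and>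
                    shape P = shape Q \<and> condT n r P \<and> condT n r Q}
           {w \<in> W_tilde d n r. stays_in_chamber d w}"
proof -
  let ?A = "{T \<in> SYT_set (r*n) d. condT n r T}"
  let ?L = "{w. length w = r*n \<and> lattice_word d w \<and> descending_in_blocks n r w}"
  have "bij_betw (\<lambda>T. colseq T (r*n)) ?A ?L"
    using bij_betw_Collect[OF bij_betw_colseq, where P = "condT n r" and Q = "descending_in_blocks n r"]
      condT_iff_descending_in_blocks SYT_set_D(1) by (simp add: conj_assoc)
  moreover from this have "bij_betw (\<lambda>T. rev (colseq T (r*n))) ?A (rev ` ?L)"
    using bij_betw_trans[of _ ?A ?L rev] by (simp add: bij_betw_imageI comp_def)
  ultimately have "bij_betw (map_prod (\<lambda>T. colseq T (r*n)) (\<lambda>T. rev (colseq T (r*n)))) (?A \<times> ?A) (?L \<times> rev ` ?L)"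
    by (rule bij_betw_map_prod)
  then have "bij_betw (map_prod (\<lambda>T. colseq T (r*n)) (\<lambda>T. rev (colseq T (r*n))))
      {x \<in> ?A \<times> ?A. shape (fst x) = shape (snd x)}
      {y \<in> ?L \<times> rev ` ?L. \<forall>j\<in>{1..d}. count_list (fst y) j = count_list (snd y) j}"
    by (rule bij_betw_Collect) (auto simp: shape_eq_iff_count_list_colseq_eq)
  moreover have "{x \<in> ?A \<times> ?A. shape (fst x) = shape (snd x)} =
      {(P, Q). P \<in> SYT_set (r*n) d \<and> Q \<in> SYT_set (r*n) d \<and> shape P = shape Q \<and> condT n r P \<and> condT n r Q}"
    by auto
  moreover have "{y \<in> ?L \<times> rev ` ?L. \<forall>j\<in>{1..d}. count_list (fst y) j = count_list (snd y) j} =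
      {w \<in> W_tilde d n r. stays_in_chamber d w}"
    unfolding chamber_walks_eq by auto
  ultimately show ?thesis by (simp add: map_prod_def)
qed

end
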